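(* (a) Consider 3-Majority with $k\le c\sqrt{n/\log n}$, where $c>0$ is a sufficiently small constant. Then there exists an initial configuration from which the consensus time is $\Omega(k)$ with high probability. (b) Consider 2-Choices with $k\le c\,n/\log n$, where $c>0$ is a sufficiently small constant. Then there exists an initial configuration from which the consensus time is $\Omega(k)$ with high probability.
   Context: **Setting.** Let $V$ be a set of $n$ vertices and $k\in\{1,\dots,n\}$. A configuration is a map $\mathsf{opn}\colon V\to[k]$. The process is synchronous: each round $t\ge1$ produces $\mathsf{opn}_t$ from $\mathsf{opn}_{t-1}$, and all vertices make their choices independently. **3-Majority.** Each vertex $v$ samples $w_1,w_2,w_3\in V$ independently and uniformly, with replacement. It sets $\mathsf{opn}_t(v)=\mathsf{opn}_{t-1}(w_1)$ if $\mathsf{opn}_{t-1}(w_1)=\mathsf{opn}_{t-1}(w_2)$, and $\mathsf{opn}_t(v)=\mathsf{opn}_{t-1}(w_3)$ otherwise. **2-Choices.** Each vertex $v$ samples $w_1,w_2\in V$ independently and uniformly, with replacement. It sets $\mathsf{opn}_t(v)=\mathsf{opn}_{t-1}(w_1)$ if $\mathsf{opn}_{t-1}(w_1)=\mathsf{opn}_{t-1}(w_2)$, and $\mathsf{opn}_t(v)=\mathsf{opn}_{t-1}(v)$ otherwise. **Consensus time.** $\tau_{\mathrm{cons}}=\inf\{t\ge0:\exists i\ \forall v,\ \mathsf{opn}_t(v)=i\}$. **Conventions.** "With high probability" means with probability $1-O(n^{-c'})$ for some constant $c'>0$. *)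

theory Defs
  imports "HOL-Probability.Probability"
begin

text \<open>Vertices are 0..<n, opinions are 1..k; a configuration is a map nat => nat
  (only the values on vertices below n matter).\<close>

type_synonym config = "nat \<Rightarrow> nat"

definition three_majority_vertex :: "nat \<Rightarrow> config \<Rightarrow> nat pmf" where
  "three_majority_vertex n x =
     do { w1 \<leftarrow> pmf_of_set {..<n}; w2 \<leftarrow> pmf_of_set {..<n}; w3 \<leftarrow> pmf_of_set {..<n};
          return_pmf (if x w1 = x w2 then x w1 else x w3) }"

definition three_majority_step :: "nat \<Rightarrow> config \<Rightarrow> config pmf" where
  "three_majority_step n x = Pi_pmf {..<n} 0 (\<lambda>v. three_majority_vertex n x)"

definition two_choices_vertex :: "nat \<Rightarrow> config \<Rightarrow> nat \<Rightarrow> nat pmf" where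
  "two_choices_vertex n x v =
     do { w1 \<leftarrow> pmf_of_set {..<n}; w2 \<leftarrow> pmf_of_set {..<n};
          return_pmf (if x w1 = x w2 then x w1 else x v) }"

definition two_choices_step :: "nat \<Rightarrow> config \<Rightarrow> config pmf" where
  "two_choices_step n x = Pi_pmf {..<n} 0 (\<lambda>v. two_choices_vertex n x v)"

fun trajectory :: "(config \<Rightarrow> config pmf) \<Rightarrow> nat \<Rightarrow> config \<Rightarrow> config list pmf" where
  "trajectory step 0 x = return_pmf [x]"
| "trajectory step (Suc t) x =
     bind_pmf (trajectory step t x) (\<lambda>xs. map_pmf (\<lambda>y. xs @ [y]) (step (last xs)))"

definition is_consensus :: "nat \<Rightarrow> config \<Rightarrow> bool" where
  "is_consensus n x \<longleftrightarrow> (\<exists>i. \<forall>v<n. x v = i)"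

text \<open>Probability that consensus is reached at some time t with t < s,
  i.e. the probability of the event tau_cons < s.\<close>
definition prob_cons_before :: "(config \<Rightarrow> config pmf) \<Rightarrow> nat \<Rightarrow> config \<Rightarrow> real \<Rightarrow> real" where
  "prob_cons_before step n x s =
     measure_pmf.prob (trajectory step (nat \<lfloor>s\<rfloor>) x)
       {xs. \<exists>t<length xs. real t < s \<and> is_consensus n (xs ! t)}"

end

theory Submission
  imports Defs
begin

text \<open>
  Start from the balanced configuration in which each of the \<open>k\<close> opinions is held by about
  \<open>n/k\<close> vertices, and fix one opinion class \<open>S\<close>, holding \<open>N = a n\<close> vertices. In the next round
  every vertex joins \<open>S\<close> independently, with probability at most \<open>a\<^sup>2 + a\<close> for 3-Majority and at
  most \<open>a\<^sup>2\<close> for a 2-Choices vertex outside \<open>S\<close>. Hence, as long as \<open>a < \<theta> = 2/k\<close>, the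
  moment generating function of the new count is at most \<open>exp (\<lambda> (1 + O(\<theta>)) N)\<close>, so
  \<open>exp (\<lambda>\<^sub>t N\<^sub>t)\<close> is a supermartingale for exponents \<open>\<lambda>\<^sub>t\<close> that shrink slowly in time and stay
  within a constant factor of each other for \<open>\<Omega>(k)\<close> rounds. Capped at \<open>exp (\<lambda> \<theta> n)\<close>
  it is a supermartingale unconditionally, and Markov's inequality bounds the probability that
  \<open>S\<close> takes over all vertices by \<open>exp (-\<Omega>(n/k\<^sup>2))\<close> resp. \<open>exp (-\<Omega>(n/k))\<close>, which is polynomially
  small in the stated ranges of \<open>k\<close>. A union bound over the classes and the rounds finishes.
\<close>

lemma integrable_measure_pmf_bounded:
  fixes f :: "'a \<Rightarrow> real"
  assumes "\<And>y. 0 \<le> f y" "\<And>y. f y \<le> B"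
  shows "integrable (measure_pmf p) f"
  by (rule measure_pmf.integrable_const_bound[where B=B]) (use assms in auto)

lemma integral_bind_pmf_bounded:
  fixes f :: "'b \<Rightarrow> real"
  assumes nonneg: "\<And>y. 0 \<le> f y" and bounded: "\<And>y. f y \<le> B"
  shows "measure_pmf.expectation (bind_pmf M N) f =
         measure_pmf.expectation M (\<lambda>x. measure_pmf.expectation (N x) f)"
proof -
  have int: "integrable (measure_pmf P) f" for P :: "'b pmf"
    using integrable_measure_pmf_bounded assms .
  have inner_nonneg: "0 \<le> measure_pmf.expectation (N x) f" for x
    using nonneg by (rule Bochner_Integration.integral_nonneg)
  have inner_le: "measure_pmf.expectation (N x) f \<le> B" for x
    using int bounded by (intro measure_pmf.integral_le_const) auto
  have "ennreal (measure_pmf.expectation (bind_pmf M N) f) = (\<integral>\<^sup>+y. f y \<partial>bind_pmf M N)"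
    using int nonneg by (intro nn_integral_eq_integral[symmetric]) auto
  also have "\<dots> = (\<integral>\<^sup>+x. \<integral>\<^sup>+y. f y \<partial>N x \<partial>M)"
    by simp
  also have "\<dots> = (\<integral>\<^sup>+x. measure_pmf.expectation (N x) f \<partial>M)"
    using int nonneg by (intro nn_integral_cong nn_integral_eq_integral) auto
  also have "\<dots> = ennreal (measure_pmf.expectation M (\<lambda>x. measure_pmf.expectation (N x) f))"
    using inner_nonneg inner_le
    by (intro nn_integral_eq_integral integrable_measure_pmf_bounded) auto
  finally show ?thesis
    using inner_nonneg by (simp add: Bochner_Integration.integral_nonneg nonneg)
qed

lemma prob_bind_pmf_of_set_lessThan:
  assumes "n > 0"
  shows "measure_pmf.prob (pmf_of_set {..<n} \<bind> N) S = (\<Sum>w<n. measure_pmf.prob (N w) S) / real n"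
proof -
  have "measure_pmf.prob (pmf_of_set {..<n} \<bind> N) S =
        measure_pmf.expectation (pmf_of_set {..<n}) (\<lambda>w. measure_pmf.expectation (N w) (indicator S))"
    by (subst integral_bind_pmf_bounded[where B=1, symmetric]) auto
  also have "\<dots> = (\<Sum>w<n. measure_pmf.prob (N w) S) / real n"
    using assms by (subst integral_pmf_of_set) auto
  finally show ?thesis .
qed

subsection \<open>Trajectories\<close>

lemma length_of_trajectory:
  "xs \<in> set_pmf (trajectory step t x) \<Longrightarrow> length xs = Suc t"
  by (induction t arbitrary: xs) auto

lemma map_pmf_butlast_trajectory:
  "map_pmf butlast (trajectory step (Suc t) x) = trajectory step t x"
  by (simp add: map_bind_pmf map_pmf_comp bind_return_pmf')

lemma map_pmf_nth_trajectory:
  assumes "m \<le> t"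
  shows "map_pmf (\<lambda>xs. xs ! m) (trajectory step t x) = map_pmf last (trajectory step m x)"
  using assms
proof (induction t)
  case 0
  then show ?case by simp
next
  case (Suc t)
  show ?case
  proof (cases "m = Suc t")
    case True
    then show ?thesis
      by (intro map_pmf_cong) (auto dest!: length_of_trajectory simp: last_conv_nth nth_append)
  next
    case False
    with Suc.prems have "m \<le> t" by simp
    have "map_pmf (\<lambda>xs. xs ! m) (trajectory step (Suc t) x) =
          map_pmf (\<lambda>xs. xs ! m) (map_pmf butlast (trajectory step (Suc t) x))"
      unfolding map_pmf_comp using \<open>m \<le> t\<close>
      by (intro map_pmf_cong) (auto dest!: length_of_trajectory simp: nth_butlast nth_append)
    also have "\<dots> = map_pmf (\<lambda>xs. xs ! m) (trajectory step t x)"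
      by (simp only: map_pmf_butlast_trajectory)
    finally show ?thesis
      using Suc.IH \<open>m \<le> t\<close> by simp
  qed
qed

lemma expectation_trajectory_supermartingale:
  fixes \<Phi> :: "nat \<Rightarrow> config \<Rightarrow> real"
  assumes nonneg: "\<And>m y. 0 \<le> \<Phi> m y" and bounded: "\<And>m y. \<Phi> m y \<le> B"
    and super: "\<And>m y. m < T \<Longrightarrow> measure_pmf.expectation (step y) (\<Phi> (Suc m)) \<le> \<Phi> m y"
    and "m \<le> T"
  shows "measure_pmf.expectation (trajectory step m x) (\<lambda>xs. \<Phi> m (last xs)) \<le> \<Phi> 0 x"
  using \<open>m \<le> T\<close>
proof (induction m)
  case 0
  then show ?case by simp
next
  case (Suc m)
  have int: "integrable (measure_pmf p) (\<Phi> j)" for p j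
    using nonneg bounded by (rule integrable_measure_pmf_bounded)
  have "measure_pmf.expectation (trajectory step (Suc m) x) (\<lambda>xs. \<Phi> (Suc m) (last xs)) =
        measure_pmf.expectation (trajectory step m x)
          (\<lambda>xs. measure_pmf.expectation (step (last xs)) (\<Phi> (Suc m)))"
    using nonneg bounded by (simp add: integral_bind_pmf_bounded[where B=B])
  also have "\<dots> \<le> measure_pmf.expectation (trajectory step m x) (\<lambda>xs. \<Phi> m (last xs))"
  proof (rule integral_mono)
    show "integrable (measure_pmf (trajectory step m x))
            (\<lambda>xs. measure_pmf.expectation (step (last xs)) (\<Phi> (Suc m)))"
      using int nonneg bounded
      by (intro integrable_measure_pmf_bounded[where B=B] Bochner_Integration.integral_nonneg
          measure_pmf.integral_le_const) auto
    show "integrable (measure_pmf (trajectory step m x)) (\<lambda>xs. \<Phi> m (last xs))"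
      using nonneg bounded by (rule integrable_measure_pmf_bounded)
  qed (use super Suc.prems in simp)
  also have "\<dots> \<le> \<Phi> 0 x"
    using Suc by simp
  finally show ?case .
qed

subsection \<open>Opinion counts\<close>

definition num_holders :: "nat \<Rightarrow> nat set \<Rightarrow> config \<Rightarrow> nat" where
  "num_holders n S y = card {v. v < n \<and> y v \<in> S}"

definition share :: "nat \<Rightarrow> nat set \<Rightarrow> config \<Rightarrow> real" where
  "share n S y = real (num_holders n S y) / real n"

lemma sum_indicator_eq_num_holders:
  "(\<Sum>v<n. indicator S (y v)) = real (num_holders n S y)"
  by (simp add: num_holders_def indicator_def sum.If_cases Int_def conj_commute)

lemma num_holders_le: "num_holders n S y \<le> n"
  using card_mono[of "{..<n}" "{v. v < n \<and> y v \<in> S}"] by (auto simp: num_holders_def)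

lemma num_holders_eq_if_all:
  assumes "\<And>v. v < n \<Longrightarrow> y v \<in> S"
  shows "num_holders n S y = n"
proof -
  have "{v. v < n \<and> y v \<in> S} = {..<n}"
    using assms by auto
  then show ?thesis by (simp add: num_holders_def)
qed

lemma expectation_exp_num_holders_Pi_pmf:
  "measure_pmf.expectation (Pi_pmf {..<n} 0 q) (\<lambda>z. exp (l * real (num_holders n S z))) =
   (\<Prod>v<n. 1 + (exp l - 1) * measure_pmf.prob (q v) S)"
proof -
  have "exp (l * real (num_holders n S z)) = (\<Prod>v<n. exp (l * indicator S (z v)))" for z
    by (simp add: exp_sum[symmetric] sum_distrib_left[symmetric] sum_indicator_eq_num_holders)
  then have "measure_pmf.expectation (Pi_pmf {..<n} 0 q) (\<lambda>z. exp (l * real (num_holders n S z))) =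
             measure_pmf.expectation (Pi_pmf {..<n} 0 q) (\<lambda>z. \<Prod>v<n. exp (l * indicator S (z v)))"
    by simp
  also have "\<dots> = (\<Prod>v<n. measure_pmf.expectation (q v) (\<lambda>w. exp (l * indicator S w)))"
    by (rule expectation_prod_Pi_pmf)
      (auto intro!: integrable_measure_pmf_bounded[where B="exp \<bar>l\<bar>"] simp: indicator_def)
  also have "(\<lambda>w. exp (l * indicator S w)) = (\<lambda>w. 1 + (exp l - 1) * indicator S w)"
    by (auto simp: indicator_def)
  finally show ?thesis
    by (simp add: measure_pmf.emeasure_eq_measure)
qed

subsection \<open>One round of the dynamics\<close>

lemma prob_three_majority_vertex:
  assumes "n > 0"
  shows "measure_pmf.prob (three_majority_vertex n y) S =
    (\<Sum>w1<n. \<Sum>w2<n. \<Sum>w3<n. indicator S (if y w1 = y w2 then y w1 else y w3)) / real n ^ 3"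
  using assms unfolding three_majority_vertex_def
  by (simp add: prob_bind_pmf_of_set_lessThan sum_divide_distrib power3_eq_cube)

lemma prob_two_choices_vertex:
  assumes "n > 0"
  shows "measure_pmf.prob (two_choices_vertex n y v) S =
    (\<Sum>w1<n. \<Sum>w2<n. indicator S (if y w1 = y w2 then y w1 else y v)) / real n ^ 2"
  using assms unfolding two_choices_vertex_def
  by (simp add: prob_bind_pmf_of_set_lessThan sum_divide_distrib power2_eq_square)

lemma prob_three_majority_vertex_le:
  assumes "n > 0"
  shows "measure_pmf.prob (three_majority_vertex n y) S \<le> share n S y ^ 2 + share n S y"
proof -
  let ?I = "\<lambda>w. indicator S (y w) :: real"
  have "indicator S (if y w1 = y w2 then y w1 else y w3) \<le> ?I w1 * ?I w2 + ?I w3" for w1 w2 w3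
    by (auto simp: indicator_def)
  then have "measure_pmf.prob (three_majority_vertex n y) S \<le>
      (\<Sum>w1<n. \<Sum>w2<n. \<Sum>w3<n. ?I w1 * ?I w2 + ?I w3) / real n ^ 3"
    unfolding prob_three_majority_vertex[OF assms] by (intro divide_right_mono sum_mono) auto
  also have "\<dots> = share n S y ^ 2 + share n S y"
    using assms
    by (simp add: sum.distrib sum_distrib_left[symmetric] sum_distrib_right[symmetric]
        sum_indicator_eq_num_holders share_def power2_eq_square power3_eq_cube field_simps)
  finally show ?thesis .
qed

lemma prob_two_choices_vertex_le:
  assumes "n > 0" and "y v \<notin> S"
  shows "measure_pmf.prob (two_choices_vertex n y v) S \<le> share n S y ^ 2"
proof -
  let ?I = "\<lambda>w. indicator S (y w) :: real"
  have "indicator S (if y w1 = y w2 then y w1 else y v) \<le> ?I w1 * ?I w2" for w1 w2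
    using assms(2) by (auto simp: indicator_def)
  then have "measure_pmf.prob (two_choices_vertex n y v) S \<le>
      (\<Sum>w1<n. \<Sum>w2<n. ?I w1 * ?I w2) / real n ^ 2"
    unfolding prob_two_choices_vertex[OF assms(1)] by (intro divide_right_mono sum_mono) auto
  also have "\<dots> = share n S y ^ 2"
    by (simp add: sum_distrib_left[symmetric] sum_distrib_right[symmetric]
        sum_indicator_eq_num_holders share_def power2_eq_square)
  finally show ?thesis .
qed

lemma three_majority_mgf_le:
  assumes "n > 0" and "0 \<le> l"
  shows "measure_pmf.expectation (three_majority_step n y) (\<lambda>z. exp (l * real (num_holders n S z)))
         \<le> exp ((exp l - 1) * real n * (share n S y ^ 2 + share n S y))"
proof -
  let ?a = "share n S y"
  have "measure_pmf.expectation (three_majority_step n y) (\<lambda>z. exp (l * real (num_holders n S z)))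
      = (\<Prod>v<n. 1 + (exp l - 1) * measure_pmf.prob (three_majority_vertex n y) S)"
    unfolding three_majority_step_def by (rule expectation_exp_num_holders_Pi_pmf)
  also have "\<dots> \<le> (\<Prod>v<n. exp ((exp l - 1) * (?a ^ 2 + ?a)))"
  proof (intro prod_mono conjI)
    have "1 + (exp l - 1) * measure_pmf.prob (three_majority_vertex n y) S
          \<le> 1 + (exp l - 1) * (?a ^ 2 + ?a)"
      using prob_three_majority_vertex_le[OF assms(1)] assms(2)
      by (intro add_left_mono mult_left_mono) auto
    also have "\<dots> \<le> exp ((exp l - 1) * (?a ^ 2 + ?a))"
      by (rule exp_ge_add_one_self)
    finally show "1 + (exp l - 1) * measure_pmf.prob (three_majority_vertex n y) S
                  \<le> exp ((exp l - 1) * (?a ^ 2 + ?a))" .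
  qed (use assms(2) in simp)
  also have "\<dots> = exp ((exp l - 1) * real n * (?a ^ 2 + ?a))"
    by (simp add: exp_of_nat_mult[symmetric] mult_ac)
  finally show ?thesis .
qed

lemma two_choices_mgf_le:
  assumes "n > 0" and "0 \<le> l"
  shows "measure_pmf.expectation (two_choices_step n y) (\<lambda>z. exp (l * real (num_holders n S z)))
         \<le> exp (l * real (num_holders n S y) + (exp l - 1) * real n * share n S y ^ 2)"
proof -
  let ?a = "share n S y"
  have el: "0 \<le> exp l - 1"
    using assms(2) by simp
  have "measure_pmf.expectation (two_choices_step n y) (\<lambda>z. exp (l * real (num_holders n S z)))
      = (\<Prod>v<n. 1 + (exp l - 1) * measure_pmf.prob (two_choices_vertex n y v) S)"
    unfolding two_choices_step_def by (rule expectation_exp_num_holders_Pi_pmf)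
  also have "\<dots> \<le> (\<Prod>v<n. exp (l * indicator S (y v) + (exp l - 1) * ?a ^ 2))"
  proof (intro prod_mono conjI)
    fix v
    show "1 + (exp l - 1) * measure_pmf.prob (two_choices_vertex n y v) S
          \<le> exp (l * indicator S (y v) + (exp l - 1) * ?a ^ 2)"
    proof (cases "y v \<in> S")
      case True
      have "1 + (exp l - 1) * measure_pmf.prob (two_choices_vertex n y v) S \<le> 1 + (exp l - 1) * 1"
        using el by (intro add_left_mono mult_left_mono) auto
      then show ?thesis
        using True el by (simp add: order_trans[OF _ exp_le_cancel_iff[THEN iffD2]])
    next
      case False
      have "1 + (exp l - 1) * measure_pmf.prob (two_choices_vertex n y v) S \<le> 1 + (exp l - 1) * ?a ^ 2"
        using prob_two_choices_vertex_le[of n y v S, OF assms(1) False] el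
        by (intro add_left_mono mult_left_mono) auto
      also have "\<dots> \<le> exp ((exp l - 1) * ?a ^ 2)"
        by (rule exp_ge_add_one_self)
      finally show ?thesis
        using False by simp
    qed
  qed (use el in simp)
  also have "\<dots> = exp (l * real (num_holders n S y) + (exp l - 1) * real n * ?a ^ 2)"
    by (simp flip: sum_indicator_eq_num_holders exp_sum
        add: sum.distrib sum_distrib_left mult_ac)
  finally show ?thesis .
qed

lemma three_majority_exp_drift:
  assumes "n > 0" and "0 \<le> l" and "l \<le> \<theta>" and "\<theta> \<le> 1" and "share n S y \<le> \<theta>"
  shows "measure_pmf.expectation (three_majority_step n y) (\<lambda>z. exp (l * real (num_holders n S z)))
         \<le> exp (l * (1 + \<theta>) ^ 2 * real (num_holders n S y))"
proof -
  let ?N = "real (num_holders n S y)" and ?a = "share n S y"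
  have a_nonneg: "0 \<le> ?a"
    by (simp add: share_def)
  have "(exp l - 1) * real n * (?a ^ 2 + ?a) = (exp l - 1) * (?N * (1 + ?a))"
    using assms(1) by (simp add: share_def power2_eq_square field_simps)
  also have "\<dots> \<le> (l * (1 + l)) * (?N * (1 + \<theta>))"
    using exp_bound[of l] assms a_nonneg
    by (intro mult_mono mult_left_mono add_left_mono) (auto simp: power2_eq_square algebra_simps)
  also have "\<dots> \<le> (l * (1 + \<theta>)) * (?N * (1 + \<theta>))"
    using assms by (intro mult_right_mono mult_left_mono) auto
  finally have "(exp l - 1) * real n * (?a ^ 2 + ?a) \<le> l * (1 + \<theta>) ^ 2 * ?N"
    by (simp add: power2_eq_square mult_ac)
  with three_majority_mgf_le[OF assms(1,2)] show ?thesis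
    by (meson exp_le_cancel_iff order_trans)
qed

lemma two_choices_exp_drift:
  assumes "n > 0" and "0 \<le> l" and "l \<le> 2" and "share n S y \<le> \<theta>"
  shows "measure_pmf.expectation (two_choices_step n y) (\<lambda>z. exp (l * real (num_holders n S z)))
         \<le> exp ((l + 8 * \<theta>) * real (num_holders n S y))"
proof -
  let ?N = "real (num_holders n S y)" and ?a = "share n S y"
  have "real n * ?a ^ 2 = ?N * ?a"
    using assms(1) by (simp add: share_def power2_eq_square field_simps)
  moreover have "exp l - 1 \<le> 8"
  proof -
    have "exp l \<le> exp 1 * exp 1"
      using assms(3) by (simp flip: exp_add)
    also have "\<dots> \<le> 3 * 3"
      using exp_le by (intro mult_mono) auto
    finally show ?thesis by simp
  qed
  ultimately have "(exp l - 1) * real n * ?a ^ 2 \<le> 8 * (?N * \<theta>)"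
    using assms by (simp only: mult.assoc) (intro mult_mono mult_left_mono; simp add: share_def)
  then have "l * ?N + (exp l - 1) * real n * ?a ^ 2 \<le> (l + 8 * \<theta>) * ?N"
    by (simp add: algebra_simps)
  with two_choices_mgf_le[OF assms(1,2)] show ?thesis
    by (meson exp_le_cancel_iff order_trans)
qed

lemma expectation_capped_exp_le:
  fixes step :: "config \<Rightarrow> config pmf"
  assumes "0 < B" and "0 \<le> l" and "0 \<le> l'" and cap: "B \<le> exp (l * \<theta> * real n)"
    and drift: "real (num_holders n S y) < \<theta> * real n \<Longrightarrow>
        measure_pmf.expectation (step y) (\<lambda>z. exp (l' * real (num_holders n S z)))
          \<le> exp (l * real (num_holders n S y))"
  shows "measure_pmf.expectation (step y) (\<lambda>z. min (exp (l' * real (num_holders n S z))) B)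
         \<le> min (exp (l * real (num_holders n S y))) B"
proof -
  have int: "integrable (measure_pmf (step y)) (\<lambda>z. min (exp (l' * real (num_holders n S z))) B)"
    using \<open>0 < B\<close> by (intro integrable_measure_pmf_bounded[where B=B]) auto
  have "measure_pmf.expectation (step y) (\<lambda>z. min (exp (l' * real (num_holders n S z))) B) \<le> B"
    using int by (intro measure_pmf.integral_le_const) auto
  moreover have "measure_pmf.expectation (step y) (\<lambda>z. min (exp (l' * real (num_holders n S z))) B)
                 \<le> exp (l * real (num_holders n S y))"
  proof (cases "real (num_holders n S y) < \<theta> * real n")
    case True
    have "exp (l' * real (num_holders n S z)) \<le> exp (l' * real n)" for z
      using \<open>0 \<le> l'\<close> num_holders_le[of n S z] by (auto intro: mult_left_mono)
    then have "measure_pmf.expectation (step y) (\<lambda>z. min (exp (l' * real (num_holders n S z))) B)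
               \<le> measure_pmf.expectation (step y) (\<lambda>z. exp (l' * real (num_holders n S z)))"
      by (intro integral_mono[OF int] integrable_measure_pmf_bounded[where B="exp (l' * real n)"]) auto
    with drift[OF True] show ?thesis
      by linarith
  next
    case False
    have "B \<le> exp (l * real (num_holders n S y))"
      using cap False \<open>0 \<le> l\<close> by (simp add: mult.assoc mult_left_mono order_trans)
    with \<open>_ \<le> B\<close> show ?thesis
      by linarith
  qed
  ultimately show ?thesis
    by simp
qed

lemma prob_trajectory_takeover_le:
  fixes step :: "config \<Rightarrow> config pmf" and lam :: "nat \<Rightarrow> real"
  assumes "0 \<le> \<mu>" and "0 \<le> \<theta>" and "\<theta> \<le> 1" and lam_ge: "\<And>j. j \<le> T \<Longrightarrow> \<mu> \<le> lam j"
    and drift: "\<And>j y. j < T \<Longrightarrow> real (num_holders n S y) < \<theta> * real n \<Longrightarrow>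
        measure_pmf.expectation (step y) (\<lambda>z. exp (lam (Suc j) * real (num_holders n S z)))
          \<le> exp (lam j * real (num_holders n S y))"
  shows "measure_pmf.prob (trajectory step T x) {xs. num_holders n S (last xs) = n}
           \<le> exp (lam 0 * real (num_holders n S x) - \<mu> * \<theta> * real n)"
proof -
  define B where "B = exp (\<mu> * \<theta> * real n)"
  define \<Phi> where "\<Phi> j y = min (exp (lam j * real (num_holders n S y))) B" for j y
  have B: "0 < B"
    by (simp add: B_def)
  have \<Phi>_nonneg: "0 \<le> \<Phi> j y" and \<Phi>_le: "\<Phi> j y \<le> B" for j y
    using B by (auto simp: \<Phi>_def)
  have lam_nonneg: "0 \<le> lam j" if "j \<le> T" for j
    using \<open>0 \<le> \<mu>\<close> lam_ge[OF that] by simp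
  have cap: "B \<le> exp (lam j * \<theta> * real n)" if "j \<le> T" for j
    using mult_right_mono[OF lam_ge[OF that], of "\<theta> * real n"] \<open>0 \<le> \<theta>\<close>
    by (simp add: B_def mult.assoc)
  have super: "measure_pmf.expectation (step y) (\<Phi> (Suc j)) \<le> \<Phi> j y" if "j < T" for j y
    unfolding \<Phi>_def using B lam_nonneg cap drift that
    by (intro expectation_capped_exp_le[where \<theta>=\<theta>]) auto
  have full: "\<Phi> T y = B" if "num_holders n S y = n" for y
  proof -
    have "B \<le> exp (lam T * \<theta> * real n)"
      using cap by simp
    also have "\<dots> \<le> exp (lam T * real (num_holders n S y))"
      using that mult_left_mono[OF \<open>\<theta> \<le> 1\<close> lam_nonneg[of T]] by (simp add: mult_right_mono)
    finally show ?thesis by (simp add: \<Phi>_def)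
  qed
  have int: "integrable (measure_pmf (trajectory step T x)) (\<lambda>xs. \<Phi> T (last xs))"
    using \<Phi>_nonneg \<Phi>_le by (rule integrable_measure_pmf_bounded)
  have "measure_pmf.prob (trajectory step T x) {xs. num_holders n S (last xs) = n}
        \<le> measure_pmf.prob (trajectory step T x) {xs. B \<le> \<Phi> T (last xs)}"
    using full by (intro measure_pmf.finite_measure_mono) auto
  also have "\<dots> \<le> measure_pmf.expectation (trajectory step T x) (\<lambda>xs. \<Phi> T (last xs)) / B"
    using integral_Markov_inequality_measure[OF int, of UNIV B] \<Phi>_nonneg B by simp
  also have "\<dots> \<le> \<Phi> 0 x / B"
    using \<Phi>_nonneg \<Phi>_le super B
    by (intro divide_right_mono expectation_trajectory_supermartingale[where T=T]) auto
  also have "\<dots> \<le> exp (lam 0 * real (num_holders n S x) - \<mu> * \<theta> * real n)"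
    unfolding exp_diff B_def[symmetric] using B by (intro divide_right_mono) (auto simp: \<Phi>_def)
  finally show ?thesis .
qed

subsection \<open>From class takeover to consensus\<close>

text \<open>Class \<open>0\<close> collects the opinions outside \<open>1..k\<close>; they never occur, but tracking them
  spares us proving that the dynamics preserves the range of opinions.\<close>

definition opinion_class :: "nat \<Rightarrow> nat \<Rightarrow> nat set" where
  "opinion_class k i = (if i = 0 then - {1..k} else {i})"

lemma consensus_imp_opinion_class_full:
  assumes "is_consensus n y"
  shows "\<exists>i\<le>k. num_holders n (opinion_class k i) y = n"
proof -
  obtain c where c: "\<And>v. v < n \<Longrightarrow> y v = c"
    using assms unfolding is_consensus_def by blast
  show ?thesis
  proof (cases "c \<in> {1..k}")
    case True
    then show ?thesis
      by (intro exI[of _ c] conjI num_holders_eq_if_all) (auto simp: opinion_class_def c)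
  next
    case False
    then show ?thesis
      by (intro exI[of _ 0] conjI num_holders_eq_if_all) (auto simp: opinion_class_def c)
  qed
qed

lemma prob_consensus_le:
  assumes "\<And>i. i \<le> k \<Longrightarrow> measure_pmf.prob P {xs. num_holders n (opinion_class k i) (last xs) = n} \<le> \<beta>"
  shows "measure_pmf.prob P {xs. is_consensus n (last xs)} \<le> real (Suc k) * \<beta>"
proof -
  have "measure_pmf.prob P {xs. is_consensus n (last xs)} \<le>
        measure_pmf.prob P (\<Union>i\<le>k. {xs. num_holders n (opinion_class k i) (last xs) = n})"
    by (rule measure_pmf.finite_measure_mono) (auto dest: consensus_imp_opinion_class_full)
  also have "\<dots> \<le> (\<Sum>i\<le>k. measure_pmf.prob P {xs. num_holders n (opinion_class k i) (last xs) = n})"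
    by (rule measure_pmf.finite_measure_subadditive_finite) auto
  also have "\<dots> \<le> (\<Sum>i\<le>k. \<beta>)"
    using assms by (intro sum_mono) simp
  finally show ?thesis by simp
qed

lemma prob_cons_before_le:
  assumes "\<And>t i. t \<le> nat \<lfloor>s\<rfloor> \<Longrightarrow> i \<le> k \<Longrightarrow>
      measure_pmf.prob (trajectory step t x) {xs. num_holders n (opinion_class k i) (last xs) = n} \<le> \<beta>"
  shows "prob_cons_before step n x s \<le> real (Suc (nat \<lfloor>s\<rfloor>)) * (real (Suc k) * \<beta>)"
proof -
  define T where "T = nat \<lfloor>s\<rfloor>"
  have before_T: "t \<le> T" if "real t < s" for t
    using that unfolding T_def by linarith
  have "prob_cons_before step n x s \<le>
        measure_pmf.prob (trajectory step T x) (\<Union>t\<le>T. {xs. is_consensus n (xs ! t)})"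
    unfolding prob_cons_before_def T_def[symmetric]
    by (rule measure_pmf.finite_measure_mono) (auto dest: before_T)
  also have "\<dots> \<le> (\<Sum>t\<le>T. measure_pmf.prob (trajectory step T x) {xs. is_consensus n (xs ! t)})"
    by (rule measure_pmf.finite_measure_subadditive_finite) auto
  also have "\<dots> \<le> (\<Sum>t\<le>T. real (Suc k) * \<beta>)"
  proof (rule sum_mono)
    fix t assume "t \<in> {..T}"
    then have "measure_pmf.prob (trajectory step T x) {xs. is_consensus n (xs ! t)}
        = measure_pmf.prob (map_pmf last (trajectory step t x)) {y. is_consensus n y}"
      by (simp flip: map_pmf_nth_trajectory)
    also have "\<dots> \<le> real (Suc k) * \<beta>"
      using assms \<open>t \<in> {..T}\<close> by (simp del: of_nat_Suc add: prob_consensus_le T_def)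
    finally show "measure_pmf.prob (trajectory step T x) {xs. is_consensus n (xs ! t)}
                  \<le> real (Suc k) * \<beta>" .
  qed
  finally show ?thesis by (simp add: T_def)
qed

subsection \<open>The balanced initial configuration\<close>

definition round_robin :: "nat \<Rightarrow> config" where
  "round_robin k v = v mod k + 1"

lemma round_robin_in_range: "0 < k \<Longrightarrow> round_robin k v \<in> {1..k}"
  by (simp add: round_robin_def Suc_leI)

lemma num_holders_round_robin_le:
  assumes "0 < k"
  shows "real (num_holders n (opinion_class k i) (round_robin k)) \<le> real n / real k + 1"
proof (cases "i = 0")
  case True
  then show ?thesis
    using round_robin_in_range[OF assms] by (simp add: num_holders_def opinion_class_def)
next
  case False
  let ?H = "{v. v < n \<and> round_robin k v \<in> {i}}"
  have "inj_on (\<lambda>v. v div k) ?H"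
    by (rule inj_onI) (metis (mono_tags) div_mult_mod_eq mem_Collect_eq round_robin_def
        singletonD add_right_cancel)
  then have "num_holders n (opinion_class k i) (round_robin k) = card ((\<lambda>v. v div k) ` ?H)"
    using False by (simp add: num_holders_def opinion_class_def card_image)
  also have "\<dots> \<le> card {..n div k}"
    by (intro card_mono) (auto intro: div_le_mono)
  finally have "real (num_holders n (opinion_class k i) (round_robin k)) \<le> real (n div k) + 1"
    by simp
  also have "real (n div k) \<le> real n / real k"
    using assms by (simp add: le_divide_eq flip: of_nat_mult)
  finally show ?thesis by simp
qed

subsection \<open>Takeover probabilities\<close>

lemma one_plus_power_le_three_halves:
  fixes \<theta> :: real
  assumes "0 \<le> \<theta>" and "2 * real m * \<theta> \<le> 1/4"
  shows "(1 + \<theta>) ^ (2 * m) \<le> 3/2"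
proof -
  have "(1 + \<theta>) ^ (2 * m) \<le> exp \<theta> ^ (2 * m)"
    using assms(1) by (intro power_mono) auto
  also have "\<dots> = exp (2 * real m * \<theta>)"
    by (simp flip: exp_of_nat_mult)
  also have "\<dots> \<le> exp (1/4)"
    using assms(2) by simp
  also have "\<dots> \<le> 1 + 1/4 + (1/4)^2"
    by (rule exp_bound) auto
  finally show ?thesis
    by (simp add: power2_eq_square)
qed

lemma three_majority_takeover_prob_le:
  assumes "0 < n" and "2 \<le> k" and "real t \<le> real k / 16"
  shows "measure_pmf.prob (trajectory (three_majority_step n) t x) {xs. num_holders n S (last xs) = n}
         \<le> exp (3 * real (num_holders n S x) / (2 * real k) - 2 * real n / real k ^ 2)"
proof -
  define \<theta> :: real where "\<theta> = 2 / real k"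
  \<comment> \<open>One round costs a factor \<open>(1 + \<theta>)\<^sup>2\<close> in the exponent, and \<open>t\<close> rounds cost at most \<open>3/2\<close>.\<close>
  define lam where "lam j = (1 + \<theta>) ^ (2 * (t - j)) / real k" for j
  have k: "2 \<le> real k"
    using assms(2) by simp
  have \<theta>: "0 \<le> \<theta>" "\<theta> \<le> 1"
    using k by (auto simp: \<theta>_def)
  have lam_ge: "1 / real k \<le> lam j" for j
    using \<theta> k by (simp add: lam_def divide_right_mono)
  have lam_le: "lam j \<le> 3 / (2 * real k)" for j
  proof -
    have "2 * real (t - j) * \<theta> \<le> 1/4"
      using assms(3) k by (simp add: \<theta>_def field_simps)
    then have "(1 + \<theta>) ^ (2 * (t - j)) \<le> 3/2"
      by (rule one_plus_power_le_three_halves[OF \<theta>(1)])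
    from divide_right_mono[OF this, of "real k"] show ?thesis
      by (simp add: lam_def)
  qed
  have "measure_pmf.prob (trajectory (three_majority_step n) t x) {xs. num_holders n S (last xs) = n}
        \<le> exp (lam 0 * real (num_holders n S x) - 1 / real k * \<theta> * real n)"
  proof (rule prob_trajectory_takeover_le[OF _ \<theta> lam_ge])
    fix j y
    assume "j < t" and "real (num_holders n S y) < \<theta> * real n"
    then have "share n S y \<le> \<theta>"
      using assms(1) by (simp add: share_def divide_le_eq)
    moreover have "lam (Suc j) \<le> \<theta>"
      using lam_le[of "Suc j"] k by (simp add: \<theta>_def field_simps)
    moreover have "lam j = lam (Suc j) * (1 + \<theta>) ^ 2"
    proof -
      have "2 * (t - j) = 2 * (t - Suc j) + 2"
        using \<open>j < t\<close> by simp
      then show ?thesis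
        by (simp add: lam_def power_add power2_eq_square)
    qed
    moreover have "0 \<le> lam (Suc j)"
      by (rule order_trans[OF _ lam_ge]) simp
    ultimately show "measure_pmf.expectation (three_majority_step n y)
          (\<lambda>z. exp (lam (Suc j) * real (num_holders n S z))) \<le> exp (lam j * real (num_holders n S y))"
      using three_majority_exp_drift[OF assms(1) _ _ \<theta>(2)] by simp
  qed simp
  also have "\<dots> \<le> exp (3 * real (num_holders n S x) / (2 * real k) - 2 * real n / real k ^ 2)"
    using mult_right_mono[OF lam_le[of 0], of "real (num_holders n S x)"]
    by (simp add: \<theta>_def power2_eq_square)
  finally show ?thesis .
qed

lemma two_choices_takeover_prob_le:
  assumes "0 < n" and "2 \<le> k" and "real t \<le> real k / 32"
  shows "measure_pmf.prob (trajectory (two_choices_step n) t x) {xs. num_holders n S (last xs) = n}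
         \<le> exp (3/2 * real (num_holders n S x) - 2 * real n / real k)"
proof -
  define \<theta> :: real where "\<theta> = 2 / real k"
  \<comment> \<open>One round costs an additive \<open>8 \<theta>\<close> in the exponent, and \<open>t\<close> rounds cost at most \<open>1/2\<close>.\<close>
  define lam where "lam j = 1 + 8 * \<theta> * real (t - j)" for j
  have k: "2 \<le> real k"
    using assms(2) by simp
  have \<theta>: "0 \<le> \<theta>" "\<theta> \<le> 1"
    using k by (auto simp: \<theta>_def)
  have lam_ge: "1 \<le> lam j" for j
    using \<theta> by (simp add: lam_def)
  have lam_le: "lam j \<le> 3/2" for j
  proof -
    have "8 * \<theta> * real (t - j) \<le> 8 * \<theta> * real t"
      using \<theta> by (intro mult_left_mono) auto
    also have "\<dots> \<le> 1/2"
      using assms(3) k by (simp add: \<theta>_def field_simps)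
    finally show ?thesis by (simp add: lam_def)
  qed
  have "measure_pmf.prob (trajectory (two_choices_step n) t x) {xs. num_holders n S (last xs) = n}
        \<le> exp (lam 0 * real (num_holders n S x) - 1 * \<theta> * real n)"
  proof (rule prob_trajectory_takeover_le[OF _ \<theta> lam_ge])
    fix j y
    assume "j < t" and "real (num_holders n S y) < \<theta> * real n"
    then have "share n S y \<le> \<theta>"
      using assms(1) by (simp add: share_def divide_le_eq)
    moreover have "lam j = lam (Suc j) + 8 * \<theta>"
      using \<open>j < t\<close> by (simp add: lam_def of_nat_diff algebra_simps)
    ultimately show "measure_pmf.expectation (two_choices_step n y)
          (\<lambda>z. exp (lam (Suc j) * real (num_holders n S z))) \<le> exp (lam j * real (num_holders n S y))"
      using two_choices_exp_drift[OF assms(1)] lam_ge[of "Suc j"] lam_le[of "Suc j"] by simp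
  qed simp
  also have "\<dots> \<le> exp (3/2 * real (num_holders n S x) - 2 * real n / real k)"
    using mult_right_mono[OF lam_le[of 0], of "real (num_holders n S x)"] by (simp add: \<theta>_def)
  finally show ?thesis .
qed

lemma three_majority_round_robin_takeover_prob_le:
  assumes "0 < n" and "2 \<le> k" and "real t \<le> real k / 16"
  shows "measure_pmf.prob (trajectory (three_majority_step n) t (round_robin k))
           {xs. num_holders n (opinion_class k i) (last xs) = n} \<le> exp (1 - real n / (2 * real k ^ 2))"
proof -
  have "3 * real (num_holders n (opinion_class k i) (round_robin k)) / (2 * real k) - 2 * real n / real k ^ 2
        \<le> 3 * (real n / real k + 1) / (2 * real k) - 2 * real n / real k ^ 2"
    using num_holders_round_robin_le[of k n i] assms(2) by (simp add: divide_right_mono)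
  also have "\<dots> \<le> 1 - real n / (2 * real k ^ 2)"
    using assms(2) by (simp add: field_simps power2_eq_square)
  finally show ?thesis
    using three_majority_takeover_prob_le[OF assms] by (meson exp_le_cancel_iff order_trans)
qed

lemma two_choices_round_robin_takeover_prob_le:
  assumes "0 < n" and "2 \<le> k" and "real t \<le> real k / 32"
  shows "measure_pmf.prob (trajectory (two_choices_step n) t (round_robin k))
           {xs. num_holders n (opinion_class k i) (last xs) = n} \<le> exp (3/2 - real n / (2 * real k))"
proof -
  have "3/2 * real (num_holders n (opinion_class k i) (round_robin k)) - 2 * real n / real k
        \<le> 3/2 * (real n / real k + 1) - 2 * real n / real k"
    using num_holders_round_robin_le[of k n i] assms(2) by simp
  also have "\<dots> = 3/2 - real n / (2 * real k)"
    using assms(2) by (simp add: field_simps)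
  finally show ?thesis
    using two_choices_takeover_prob_le[OF assms] by (meson exp_le_cancel_iff order_trans)
qed

lemma one_le_ln: "3 \<le> x \<Longrightarrow> 1 \<le> ln (x :: real)"
  using exp_le by (subst ln_ge_iff) auto

lemma union_bound_polynomially_small:
  fixes A X :: real
  assumes "3 \<le> n" and "T \<le> n" and "k \<le> n" and "4 * ln (real n) \<le> X" and "A \<le> 3/2"
  shows "real (Suc T) * (real (Suc k) * exp (A - X)) \<le> 4 * exp (3/2) * real n powr - 2"
proof -
  have n: "0 < real n"
    using assms(1) by simp
  have "exp (A - X) \<le> exp (3/2 - 4 * ln (real n))"
    using assms(4,5) by simp
  also have "\<dots> = exp (3/2) * real n powr - 4"
    using n by (simp add: powr_def flip: exp_add)
  finally have exp_le: "exp (A - X) \<le> exp (3/2) * real n powr - 4" .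
  have "real (Suc T) * real (Suc k) \<le> (2 * real n) * (2 * real n)"
    using assms(1-3) by (intro mult_mono) auto
  also have "\<dots> = 4 * real n powr 2"
    using n by (simp add: power2_eq_square)
  finally have count_le: "real (Suc T) * real (Suc k) \<le> 4 * real n powr 2" .
  have "real (Suc T) * (real (Suc k) * exp (A - X)) = real (Suc T) * real (Suc k) * exp (A - X)"
    by (simp only: mult.assoc)
  also have "\<dots> \<le> 4 * real n powr 2 * (exp (3/2) * real n powr - 4)"
    by (rule mult_mono[OF count_le exp_le]) auto
  also have "\<dots> = 4 * exp (3/2) * (real n powr 2 * real n powr - 4)"
    by (simp only: mult_ac)
  also have "\<dots> = 4 * exp (3/2) * real n powr - 2"
    by (simp only: powr_add[symmetric]) simp
  finally show ?thesis .
qed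

lemma three_majority_late_consensus:
  assumes "3 \<le> n" and "2 \<le> k" and "real k \<le> 1/4 * sqrt (real n / ln (real n))"
  shows "\<exists>x. (\<forall>v<n. x v \<in> {1..k}) \<and>
           prob_cons_before (three_majority_step n) n x (1/16 * real k) \<le> 4 * exp (3/2) * real n powr - 2"
proof -
  have ln: "1 \<le> ln (real n)"
    using assms(1) by (intro one_le_ln) simp
  have "(4 * real k) ^ 2 \<le> sqrt (real n / ln (real n)) ^ 2"
    using assms(3) by (intro power_mono) auto
  then have k_sq: "16 * ln (real n) * real k ^ 2 \<le> real n"
    using ln by (simp add: field_simps power_mult_distrib)
  then have X: "4 * ln (real n) \<le> real n / (2 * real k ^ 2)"
    using assms(2) by (simp add: field_simps)
  have "1 \<le> 16 * ln (real n) * real k"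
    using ln assms(2) mult_mono[of 1 "16 * ln (real n)" 1 "real k"] by simp
  from mult_right_mono[OF this, of "real k"] have "real k \<le> 16 * ln (real n) * real k ^ 2"
    by (simp add: power2_eq_square mult.assoc)
  with k_sq have "k \<le> n" and T: "nat \<lfloor>1/16 * real k\<rfloor> \<le> n"
    by linarith+
  have "prob_cons_before (three_majority_step n) n (round_robin k) (1/16 * real k)
        \<le> real (Suc (nat \<lfloor>1/16 * real k\<rfloor>)) * (real (Suc k) * exp (1 - real n / (2 * real k ^ 2)))"
    using assms(1,2) by (intro prob_cons_before_le three_majority_round_robin_takeover_prob_le) linarith+
  also have "\<dots> \<le> 4 * exp (3/2) * real n powr - 2"
    using union_bound_polynomially_small[OF assms(1) T \<open>k \<le> n\<close> X] by simp
  finally show ?thesis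
    using assms(2) round_robin_in_range by (intro exI[of _ "round_robin k"]) auto
qed

lemma two_choices_late_consensus:
  assumes "3 \<le> n" and "2 \<le> k" and "real k \<le> 1/8 * real n / ln (real n)"
  shows "\<exists>x. (\<forall>v<n. x v \<in> {1..k}) \<and>
           prob_cons_before (two_choices_step n) n x (1/32 * real k) \<le> 4 * exp (3/2) * real n powr - 2"
proof -
  have ln: "1 \<le> ln (real n)"
    using assms(1) by (intro one_le_ln) simp
  then have k_ln: "8 * ln (real n) * real k \<le> real n"
    using assms(3) by (simp add: field_simps)
  then have X: "4 * ln (real n) \<le> real n / (2 * real k)"
    using assms(2) by (simp add: field_simps)
  have "real k \<le> 8 * ln (real n) * real k"
    using ln assms(2) by simp
  with k_ln have "k \<le> n" and T: "nat \<lfloor>1/32 * real k\<rfloor> \<le> n"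
    by linarith+
  have "prob_cons_before (two_choices_step n) n (round_robin k) (1/32 * real k)
        \<le> real (Suc (nat \<lfloor>1/32 * real k\<rfloor>)) * (real (Suc k) * exp (3/2 - real n / (2 * real k)))"
    using assms(1,2) by (intro prob_cons_before_le two_choices_round_robin_takeover_prob_le) linarith+
  also have "\<dots> \<le> 4 * exp (3/2) * real n powr - 2"
    using union_bound_polynomially_small[OF assms(1) T \<open>k \<le> n\<close> X] by simp
  finally show ?thesis
    using assms(2) round_robin_in_range by (intro exI[of _ "round_robin k"]) auto
qed

theorem theorem2p6:
  shows
  "(\<exists>c>0. \<exists>d>0. \<exists>c'>0. \<exists>C>0. \<exists>n0. \<forall>n\<ge>n0. \<forall>k::nat.
      2 \<le> k \<and> real k \<le> c * sqrt (real n / ln (real n)) \<longrightarrow>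
      (\<exists>x::nat \<Rightarrow> nat. (\<forall>v<n. x v \<in> {1..k}) \<and>
         prob_cons_before (three_majority_step n) n x (d * real k) \<le> C * real n powr (- c')))
 \<and> (\<exists>c>0. \<exists>d>0. \<exists>c'>0. \<exists>C>0. \<exists>n0. \<forall>n\<ge>n0. \<forall>k::nat.
      2 \<le> k \<and> real k \<le> c * real n / ln (real n) \<longrightarrow>
      (\<exists>x::nat \<Rightarrow> nat. (\<forall>v<n. x v \<in> {1..k}) \<and>
         prob_cons_before (two_choices_step n) n x (d * real k) \<le> C * real n powr (- c')))"
proof -
  have "\<forall>n\<ge>3. \<forall>k::nat. 2 \<le> k \<and> real k \<le> 1/4 * sqrt (real n / ln (real n)) \<longrightarrow>
      (\<exists>x::nat \<Rightarrow> nat. (\<forall>v<n. x v \<in> {1..k}) \<and>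
         prob_cons_before (three_majority_step n) n x (1/16 * real k) \<le> 4 * exp (3/2) * real n powr - 2)"
    using three_majority_late_consensus by blast
  moreover have "\<forall>n\<ge>3. \<forall>k::nat. 2 \<le> k \<and> real k \<le> 1/8 * real n / ln (real n) \<longrightarrow>
      (\<exists>x::nat \<Rightarrow> nat. (\<forall>v<n. x v \<in> {1..k}) \<and>
         prob_cons_before (two_choices_step n) n x (1/32 * real k) \<le> 4 * exp (3/2) * real n powr - 2)"
    using two_choices_late_consensus by blast
  moreover have "(0::real) < 1/4" "(0::real) < 1/8" "(0::real) < 1/16" "(0::real) < 1/32"
    "(0::real) < 2" "(0::real) < 4 * exp (3/2)"
    by auto
  ultimately show ?thesis
    by blast
qed

end
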